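(* Let $v=v(n)$ and $r=r(n)$ be positive integers with $v\to\infty$, $r\to\infty$ and $r=o(v)$. If the random vector $\mathbf d=(d_1,\dots,d_v)$ has distribution $\mathrm{Multi}(v,2v+r)|_{\ge2}$, then a.a.s. $D_3(\mathbf d)\sim r$ and \[\sum_{i:d_i\ge3}\binom{d_i}{2}<4r.\]
   Context: For positive integers $v,t$, $\mathrm{Multi}(v,t)$ is the multinomial distribution on vectors $(d_1,\dots,d_v)$ of nonnegative integers summing to $t$, with $\mathbf P[d_1=j_1,\dots,d_v=j_v]=\frac{t!}{v^t j_1!\cdots j_v!}$ (the numbers of balls in $v$ bins when $t$ balls are thrown independently and uniformly). $\mathrm{Multi}(v,t)|_{\ge2}$ is this distribution conditioned on the event that every $d_i\ge2$. $D_3(\mathbf d)=|\{i:d_i=3\}|$. A.a.s. means with probability $1-o(1)$ as $n\to\infty$. *)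

theory Defs
  imports Complex_Main
begin

definition vectors :: "nat \<Rightarrow> nat \<Rightarrow> nat list set" where
  "vectors v t = {d. length d = v \<and> sum_list d = t}"

definition multi_pmf :: "nat \<Rightarrow> nat \<Rightarrow> nat list \<Rightarrow> real" where
  "multi_pmf v t d = fact t / (real v ^ t * prod_list (map fact d))"

definition multi_prob :: "nat \<Rightarrow> nat \<Rightarrow> (nat list \<Rightarrow> bool) \<Rightarrow> real" where
  "multi_prob v t P = (\<Sum>d\<in>{d\<in>vectors v t. P d}. multi_pmf v t d)"

definition multi_ge2_prob :: "nat \<Rightarrow> nat \<Rightarrow> (nat list \<Rightarrow> bool) \<Rightarrow> real" where
  "multi_ge2_prob v t P =
     multi_prob v t (\<lambda>d. (\<forall>i<length d. d ! i \<ge> 2) \<and> P d) /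
     multi_prob v t (\<lambda>d. \<forall>i<length d. d ! i \<ge> 2)"

definition D3 :: "nat list \<Rightarrow> nat" where
  "D3 d = card {i. i < length d \<and> d ! i = 3}"

end

theory Submission imports Defs begin

(* Conditioning Multi(m, 2m+r) on all entries \<ge> 2 gives the law on the
   finite set  ge2_vectors m r  that weighs a vector d proportionally to 1 / \<Prod> d_i!.
   A switching argument (move one ball from slot i, holding k \<ge> 3 balls, to a slot
   holding 2 balls; reverse by moving it back from a slot holding 3 balls) compares
   the weight of {d_i = k} with that of {d_i = k-1}; since at most r slots are \<ge> 3,
   this gives  W(i,k) \<le> y^(k-2) Z  with  y = r/(m-1-r)  and Z the total weight.
   Hence the tail statistic  Q(d) = \<Sum>_{d_i \<ge> 4} 2^(d_i - 2)  has conditional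
   expectation at most  m (2y)^2/(1-2y) = O(r^2/m).  Deterministically, every d with
   Q(d) < c r  (c \<le> min \<epsilon> 1) satisfies both conclusions, because
   r = \<Sum>(d_i - 2) and D3 and \<Sum>_{d_i\<ge>3} (d_i choose 2) differ from r resp. 3r by
   at most Q(d).  A weighted Markov inequality bounds the bad probability by
   O(r/m), which tends to 0 since r = o(m). *)

lemma prod_list_map_as_prod: "prod_list (map f d) = (\<Prod>l<length d. (f (d!l) :: real))"
  by (induct d rule: rev_induct) (auto simp: nth_append lessThan_Suc_atMost[symmetric] lessThan_Suc)

lemma sum_list_as_sum: "sum_list d = (\<Sum>l<length d. (d!l :: nat))"
  by (simp add: sum_list_sum_nth atLeast0LessThan)

section \<open>The conditioned law as a weighted counting measure\<close>

definition ge2_vectors :: "nat \<Rightarrow> nat \<Rightarrow> nat list set" where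
  "ge2_vectors m r = {d. length d = m \<and> sum_list d = 2*m + r \<and> (\<forall>i<m. d!i \<ge> 2)}"

text \<open>Unnormalised point mass of the multinomial law (the common factor t!/m^t dropped).\<close>
definition weight :: "nat list \<Rightarrow> real" where
  "weight d = 1 / prod_list (map fact d)"

lemma weight_pos: "weight d > 0"
  unfolding weight_def by (induct d) auto

lemma finite_vectors: "finite (vectors m s)"
proof -
  have "vectors m s \<subseteq> {xs. set xs \<subseteq> {0..s} \<and> length xs = m}"
    unfolding vectors_def using member_le_sum_list by fastforce
  thus ?thesis by (rule finite_subset) (rule finite_lists_length_eq, simp)
qed

lemma ge2_vectors_eq: "ge2_vectors m r = {d\<in>vectors m (2*m+r). \<forall>i<length d. 2 \<le> d!i}"
  unfolding ge2_vectors_def vectors_def by auto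

lemma finite_ge2_vectors: "finite (ge2_vectors m r)"
  unfolding ge2_vectors_eq using finite_vectors by simp

lemma ge2_vectors_nonempty: "m > 0 \<Longrightarrow> replicate (m-1) 2 @ [2+r] \<in> ge2_vectors m r"
  unfolding ge2_vectors_def by (auto simp: nth_append sum_list_replicate)

lemma total_weight_pos: "m > 0 \<Longrightarrow> 0 < (\<Sum>d\<in>ge2_vectors m r. weight d)"
  using finite_ge2_vectors ge2_vectors_nonempty weight_pos
  by (intro sum_pos2) (auto simp: less_imp_le)

text \<open>Conditioned probabilities are ratios of weights; this is the only place where
  the definition of the multinomial law is used.\<close>
lemma ge2_prob_as_weights:
  assumes "m > 0"
  shows "multi_ge2_prob m (2*m+r) P =
         (\<Sum>d\<in>{d\<in>ge2_vectors m r. P d}. weight d) / (\<Sum>d\<in>ge2_vectors m r. weight d)"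
proof -
  let ?c = "fact (2*m+r) / real m ^ (2*m+r) :: real"
  have "?c \<noteq> 0" using assms by simp
  moreover have "multi_prob m (2*m+r) P' = ?c * (\<Sum>d\<in>{d\<in>vectors m (2*m+r). P' d}. weight d)" for P'
    unfolding multi_prob_def multi_pmf_def weight_def sum_distrib_left by (rule sum.cong) auto
  moreover have "{d \<in> vectors m (2*m+r). (\<forall>i<length d. 2 \<le> d!i) \<and> P d} = {d\<in>ge2_vectors m r. P d}"
    and "{d \<in> vectors m (2*m+r). \<forall>i<length d. 2 \<le> d!i} = ge2_vectors m r"
    unfolding ge2_vectors_eq by auto
  ultimately show ?thesis unfolding multi_ge2_prob_def by simp
qed

lemma ge2_prob_complement:
  assumes m: "m > 0"
  shows "multi_ge2_prob m (2*m+r) G =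
         1 - (\<Sum>d\<in>{d\<in>ge2_vectors m r. \<not> G d}. weight d) / (\<Sum>d\<in>ge2_vectors m r. weight d)"
proof -
  have "(\<Sum>d\<in>ge2_vectors m r. weight d) =
        (\<Sum>d\<in>{d\<in>ge2_vectors m r. G d}. weight d) + (\<Sum>d\<in>{d\<in>ge2_vectors m r. \<not> G d}. weight d)"
    using finite_ge2_vectors by (subst sum.union_disjoint[symmetric]) (auto intro: sum.cong)
  thus ?thesis using ge2_prob_as_weights[OF m, of r G] total_weight_pos[OF m, of r]
    by (simp add: field_simps)
qed

text \<open>The excess r = \<Sum>(d_i - 2) is spread over at most r slots holding 3 or more balls.\<close>
lemma card_big_slots:
  assumes "d \<in> ge2_vectors m r" shows "card {j. j<m \<and> 3 \<le> d!j} \<le> r"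
proof -
  have len: "length d = m" and s: "sum_list d = 2*m+r" and g: "\<forall>i<m. 2 \<le> d!i"
    using assms by (auto simp: ge2_vectors_def)
  have "{..<m} \<inter> {l. 3 \<le> d!l} = {j. j<m \<and> 3 \<le> d!j}" by auto
  hence "2*m + card {j. j<m \<and> 3 \<le> d!j} = (\<Sum>l<m. 2) + (\<Sum>l<m. if 3 \<le> d!l then 1 else 0::nat)"
    by (simp add: sum.If_cases)
  also have "\<dots> = (\<Sum>l<m. 2 + (if 3 \<le> d!l then 1 else 0::nat))"
    by (rule sum.distrib[symmetric])
  also have "\<dots> \<le> (\<Sum>l<m. d!l)"
    by (rule sum_mono) (use g in \<open>auto simp: not_le\<close>)
  also have "\<dots> = 2*m+r" using s len by (simp add: sum_list_as_sum)
  finally show ?thesis by simp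
qed

lemma many_two_slots:
  assumes "d \<in> ge2_vectors m r"
  shows "real m - 1 - real r \<le> real (card {j. j<m \<and> j\<noteq>i \<and> d!j = 2})"
proof -
  have "\<forall>l<m. 2 \<le> d!l" using assms by (auto simp: ge2_vectors_def)
  hence twos: "{j. j<m \<and> d!j = 2} = {..<m} - {j. j<m \<and> 3 \<le> d!j}" by force
  have c1: "card {j. j<m \<and> d!j = 2} = m - card {j. j<m \<and> 3 \<le> d!j}"
    unfolding twos by (subst card_Diff_subset) auto
  have "{j. j<m \<and> j\<noteq>i \<and> d!j = 2} = {j. j<m \<and> d!j = 2} - {i}" by auto
  hence "card {j. j<m \<and> d!j = 2} - 1 \<le> card {j. j<m \<and> j\<noteq>i \<and> d!j = 2}"
    by (simp add: card_Diff_singleton_if)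
  thus ?thesis using c1 card_big_slots[OF assms] by linarith
qed

lemma few_three_slots:
  assumes "d \<in> ge2_vectors m r"
  shows "real (card {j. j<m \<and> j\<noteq>i \<and> d!j = 3}) \<le> real r"
proof -
  have "card {j. j<m \<and> j\<noteq>i \<and> d!j = 3} \<le> card {j. j<m \<and> 3 \<le> d!j}"
    by (rule card_mono) auto
  thus ?thesis using card_big_slots[OF assms] by linarith
qed

section \<open>The switching\<close>

lemma sum_split_two:
  fixes h :: "'b \<Rightarrow> 'a::comm_monoid_add"
  assumes "finite A" "i \<in> A" "j \<in> A" "i \<noteq> j"
  shows "sum h A = h i + h j + sum h (A - {i,j})"
  using assms by (simp add: sum.remove[of A i] sum.remove[of "A-{i}" j] Diff_insert2[symmetric]
      insert_commute add.assoc)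

lemma prod_split_two:
  fixes h :: "'b \<Rightarrow> 'a::comm_monoid_mult"
  assumes "finite A" "i \<in> A" "j \<in> A" "i \<noteq> j"
  shows "prod h A = h i * h j * prod h (A - {i,j})"
  using assms by (simp add: prod.remove[of A i] prod.remove[of "A-{i}" j] Diff_insert2[symmetric]
      insert_commute mult.assoc)

lemma update_two:
  assumes "length d = m" "i<m" "j<m" "i\<noteq>j"
  shows "sum_list (d[i:=a, j:=b]) + d!i + d!j = sum_list d + a + b"
    and "prod_list (map fact (d[i:=a, j:=b])) * fact (d!i) * fact (d!j)
         = prod_list (map fact d) * fact a * (fact b :: real)"
proof -
  let ?e = "d[i:=a, j:=b]"
  have ij: "i \<in> {..<m}" "j \<in> {..<m}" using assms by auto
  have same: "l \<in> {..<m}-{i,j} \<Longrightarrow> ?e!l = d!l" for l by auto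
  have "(\<Sum>l\<in>{..<m}-{i,j}. ?e!l) = (\<Sum>l\<in>{..<m}-{i,j}. d!l)" by (rule sum.cong) (auto simp: same)
  then show "sum_list ?e + d!i + d!j = sum_list d + a + b"
    using assms unfolding sum_list_as_sum by (simp add: sum_split_two[OF _ ij assms(4)])
  have "(\<Prod>l\<in>{..<m}-{i,j}. fact (?e!l) :: real) = (\<Prod>l\<in>{..<m}-{i,j}. fact (d!l))"
    by (rule prod.cong) (auto simp: same)
  then show "prod_list (map fact ?e) * fact (d!i) * fact (d!j) = prod_list (map fact d) * fact a * (fact b :: real)"
    using assms unfolding prod_list_map_as_prod by (simp add: prod_split_two[OF _ ij assms(4)] ac_simps)
qed

lemma update_two_in_ge2_vectors:
  assumes d: "d \<in> ge2_vectors m r" and "i<m" "j<m" "j\<noteq>i" "2 \<le> a" "2 \<le> b"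
    and "d!i + d!j = a + b"
  shows "d[i:=a, j:=b] \<in> ge2_vectors m r"
proof -
  have len: "length d = m" and "sum_list d = 2*m+r" and "\<forall>l<m. 2 \<le> d!l"
    using d by (auto simp: ge2_vectors_def)
  moreover have "sum_list (d[i:=a, j:=b]) + d!i + d!j = sum_list d + a + b"
    using update_two(1)[OF len] assms by auto
  ultimately show ?thesis using assms unfolding ge2_vectors_def by (auto simp: nth_list_update)
qed

lemma update_two_back:
  assumes "i < length d" "j < length d" "i\<noteq>j"
  shows "(d[i:=a, j:=b])[i:=d!i, j:=d!j] = d"
  by (rule nth_equalityI) (use assms in \<open>auto simp: nth_list_update\<close>)

definition marked :: "nat \<Rightarrow> nat \<Rightarrow> nat \<Rightarrow> nat \<Rightarrow> nat \<Rightarrow> (nat list \<times> nat) set" where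
  "marked m r i k h = Sigma {d\<in>ge2_vectors m r. d!i = k} (\<lambda>d. {j. j<m \<and> j\<noteq>i \<and> d!j = h})"

lemma marked_iff:
  "(d,j) \<in> marked m r i k h \<longleftrightarrow> d \<in> ge2_vectors m r \<and> d!i = k \<and> j<m \<and> j\<noteq>i \<and> d!j = h"
  unfolding marked_def by auto

lemma move_marked:
  assumes "(d,j) \<in> marked m r i a' b'" "i<m" "2 \<le> a" "2 \<le> b" "a' + b' = a + b"
  shows "(d[i:=a, j:=b], j) \<in> marked m r i a b"
proof -
  have "d \<in> ge2_vectors m r" "d!i = a'" "j<m" "j\<noteq>i" "d!j = b'"
    using assms(1) by (auto simp: marked_iff)
  moreover have "length d = m" using \<open>d \<in> ge2_vectors m r\<close> by (simp add: ge2_vectors_def)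
  ultimately show ?thesis
    using assms(2-5) update_two_in_ge2_vectors[of d m r i j a b] by (simp add: marked_iff)
qed

lemma move_marked_back:
  assumes "(d,j) \<in> marked m r i a' b'" "i<m"
  shows "d[i:=a, j:=b, i:=a', j:=b'] = d"
  using assms update_two_back[of i d j a b] by (auto simp: marked_iff ge2_vectors_def)

lemma switching_bij:
  assumes i: "i<m" and k: "3 \<le> k"
  shows "bij_betw (\<lambda>(d,j). (d[i:=k-1, j:=3], j)) (marked m r i k 2) (marked m r i (k-1) 3)"
proof (rule bij_betw_byWitness[where f'="\<lambda>(d,j). (d[i:=k, j:=2], j)"])
  show "\<forall>p\<in>marked m r i k 2. (\<lambda>(d,j). (d[i:=k, j:=2], j)) ((\<lambda>(d,j). (d[i:=k-1, j:=3], j)) p) = p"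
    using move_marked_back[OF _ i] by auto
  show "\<forall>p\<in>marked m r i (k-1) 3. (\<lambda>(d,j). (d[i:=k-1, j:=3], j)) ((\<lambda>(d,j). (d[i:=k, j:=2], j)) p) = p"
    using move_marked_back[OF _ i] by auto
  show "(\<lambda>(d,j). (d[i:=k-1, j:=3], j)) ` marked m r i k 2 \<subseteq> marked m r i (k-1) 3"
    using move_marked[OF _ i, where a'=k and b'=2 and a="k-1" and b=3] k by auto
  show "(\<lambda>(d,j). (d[i:=k, j:=2], j)) ` marked m r i (k-1) 3 \<subseteq> marked m r i k 2"
    using move_marked[OF _ i, where a'="k-1" and b'=3 and a=k and b=2] k by auto
qed

lemma switching_weight:
  assumes "length d = m" "i<m" "j<m" "i\<noteq>j" "d!i = k" "d!j = 2" "3 \<le> k"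
  shows "weight (d[i:=k-1, j:=3]) = real k / 3 * weight d"
proof -
  have fk: "fact k = real k * fact (k-1)" using assms(7) by (intro fact_reduce) simp
  have pd: "prod_list (map fact d) > (0::real)" by (induct d) auto
  have "prod_list (map fact (d[i:=k-1, j:=3])) * (real k * fact (k-1)) * 2
        = prod_list (map fact d) * fact (k-1) * (6::real)"
    using update_two(2)[OF assms(1-4), of "k-1" 3] assms(5,6) fk by (simp add: numeral_3_eq_3)
  hence "prod_list (map fact (d[i:=k-1, j:=3])) = prod_list (map fact d) * 3 / real k"
    using assms(7) by (simp add: field_simps)
  thus ?thesis unfolding weight_def using pd assms(7) by simp
qed

definition slot_weight :: "nat \<Rightarrow> nat \<Rightarrow> nat \<Rightarrow> nat \<Rightarrow> real" where
  "slot_weight m r i k = (\<Sum>d\<in>{d\<in>ge2_vectors m r. d!i = k}. weight d)"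

lemma slot_weight_nonneg: "0 \<le> slot_weight m r i k"
  unfolding slot_weight_def using weight_pos by (simp add: sum_nonneg less_imp_le)

lemma slot_weight_le_total: "slot_weight m r i k \<le> (\<Sum>d\<in>ge2_vectors m r. weight d)"
  unfolding slot_weight_def using weight_pos finite_ge2_vectors
  by (intro sum_mono2) (auto simp: less_imp_le)

lemma marked_weight_sum:
  "(\<Sum>p\<in>marked m r i k h. weight (fst p))
   = (\<Sum>d\<in>{d\<in>ge2_vectors m r. d!i = k}. real (card {j. j<m \<and> j\<noteq>i \<and> d!j = h}) * weight d)"
proof -
  have "(\<Sum>d\<in>{d\<in>ge2_vectors m r. d!i = k}. \<Sum>j\<in>{j. j<m \<and> j\<noteq>i \<and> d!j = h}. weight d)
        = (\<Sum>(d,j)\<in>marked m r i k h. weight d)"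
    unfolding marked_def using finite_ge2_vectors by (intro sum.Sigma) auto
  thus ?thesis by (simp add: split_def)
qed

text \<open>Double counting over the switching: each vector with d_i = k has at least m-1-r
  switchings, each vector with d_i = k-1 receives at most r of them.\<close>
lemma slot_weight_step:
  assumes i: "i<m" and k: "3 \<le> k"
  shows "real k / 3 * (real m - 1 - real r) * slot_weight m r i k \<le> real r * slot_weight m r i (k-1)"
proof -
  let ?f = "\<lambda>(d,j). (d[i:=k-1, j:=3], j)"
  have "real k / 3 * (real m - 1 - real r) * slot_weight m r i k
        = (\<Sum>d\<in>{d\<in>ge2_vectors m r. d!i = k}. (real m - 1 - real r) * (real k / 3 * weight d))"
    unfolding slot_weight_def sum_distrib_left by (simp add: ac_simps)
  also have "\<dots> \<le> (\<Sum>d\<in>{d\<in>ge2_vectors m r. d!i = k}.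
                     real (card {j. j<m \<and> j\<noteq>i \<and> d!j = 2}) * (real k / 3 * weight d))"
    using many_two_slots weight_pos by (intro sum_mono mult_right_mono) (auto simp: less_imp_le)
  also have "\<dots> = real k / 3 * (\<Sum>p\<in>marked m r i k 2. weight (fst p))"
    unfolding marked_weight_sum sum_distrib_left by (simp add: ac_simps)
  also have "\<dots> = (\<Sum>p\<in>marked m r i k 2. weight (fst (?f p)))"
    unfolding sum_distrib_left
  proof (rule sum.cong)
    fix p assume "p \<in> marked m r i k 2"
    then obtain d j where "p = (d,j)" "d \<in> ge2_vectors m r" "d!i = k" "j<m" "j\<noteq>i" "d!j = 2"
      by (auto simp: marked_def)
    thus "real k / 3 * weight (fst p) = weight (fst (?f p))"
      using switching_weight[of d m i j k] i k by (simp add: ge2_vectors_def)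
  qed simp
  also have "\<dots> = (\<Sum>p\<in>marked m r i (k-1) 3. weight (fst p))"
    using sum.reindex_bij_betw[OF switching_bij[OF i k], of "\<lambda>p. weight (fst p)"] by simp
  also have "\<dots> \<le> (\<Sum>d\<in>{d\<in>ge2_vectors m r. d!i = k-1}. real r * weight d)"
    unfolding marked_weight_sum
    using few_three_slots weight_pos by (intro sum_mono mult_right_mono) (auto simp: less_imp_le)
  also have "\<dots> = real r * slot_weight m r i (k-1)" unfolding slot_weight_def sum_distrib_left ..
  finally show ?thesis .
qed

lemma slot_weight_geometric:
  assumes i: "i<m" and pos: "0 < real m - 1 - real r" and k: "2 \<le> k"
  shows "slot_weight m r i k \<le> (real r / (real m - 1 - real r))^(k-2) * (\<Sum>d\<in>ge2_vectors m r. weight d)"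
  using k
proof (induction k rule: dec_induct)
  case base
  then show ?case using slot_weight_le_total by simp
next
  case (step k)
  let ?x = "real m - 1 - real r" and ?y = "real r / (real m - 1 - real r)"
  have "0 \<le> ?x * slot_weight m r i (Suc k)"
    using pos slot_weight_nonneg[of m r i "Suc k"] by simp
  hence "?x * slot_weight m r i (Suc k) \<le> real (Suc k) / 3 * (?x * slot_weight m r i (Suc k))"
    using step(1) by (intro mult_le_cancel_right1[THEN iffD2]) auto
  also have "\<dots> \<le> real r * slot_weight m r i k"
    using slot_weight_step[OF i, of "Suc k" r] step(1) by (simp add: mult.assoc)
  finally have "slot_weight m r i (Suc k) \<le> ?y * slot_weight m r i k"
    using pos by (simp add: field_simps)
  also have "\<dots> \<le> ?y * (?y^(k-2) * (\<Sum>d\<in>ge2_vectors m r. weight d))"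
    using step(3) pos by (intro mult_left_mono) auto
  also have "\<dots> = ?y^(Suc k - 2) * (\<Sum>d\<in>ge2_vectors m r. weight d)"
  proof -
    have "Suc k - 2 = Suc (k - 2)" using step(1) by simp
    thus ?thesis by (simp only: power_Suc mult.assoc)
  qed
  finally show ?case .
qed

section \<open>The tail statistic and its expectation\<close>

text \<open>A slot with k \<ge> 4 balls contributes 2^(k-2); smaller slots contribute nothing.
  The factor 2^(k-2) dominates both k-2 and (k choose 2) - 3(k-2).\<close>
definition tail_excess :: "nat \<Rightarrow> real" where
  "tail_excess k = (if 4 \<le> k then 2^(k-2) else 0)"

lemma tail_excess_nonneg: "0 \<le> tail_excess k"
  unfolding tail_excess_def by simp

lemma geometric_tail_bound:
  fixes z :: real assumes z: "0 \<le> z" "z < 1"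
  shows "(\<Sum>k\<in>{4..s}. z^(k-2)) \<le> z^2/(1-z)"
proof (cases "4 \<le> s")
  case True
  have shift: "(\<Sum>k\<in>{4..s}. z^(k-2)) = (\<Sum>j=2..s-2. z^j)"
    by (rule sum.reindex_bij_witness[of _ "\<lambda>j. j+2" "\<lambda>k. k-2"]) auto
  have "(1-z) * (\<Sum>k\<in>{4..s}. z^(k-2)) = z^2 - z^Suc (s-2)"
    unfolding shift using True by (intro sum_gp_multiplied) simp
  hence "(1-z) * (\<Sum>k\<in>{4..s}. z^(k-2)) \<le> z^2" using z by simp
  thus ?thesis using z by (simp add: field_simps)
qed (use z in simp)

lemma tail_excess_by_slot_weight:
  assumes "l < m"
  shows "(\<Sum>d\<in>ge2_vectors m r. weight d * tail_excess (d!l))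
         = (\<Sum>k\<in>{4..2*m+r}. tail_excess k * slot_weight m r l k)"
proof -
  have bounded: "d!l \<le> 2*m+r" if "d \<in> ge2_vectors m r" for d
    using that assms member_le_sum_list[of "d!l" d] unfolding ge2_vectors_def by auto
  have "(\<Sum>d\<in>ge2_vectors m r. weight d * tail_excess (d!l))
        = (\<Sum>d\<in>ge2_vectors m r. \<Sum>k\<in>{4..2*m+r}. if d!l = k then weight d * tail_excess k else 0)"
    by (rule sum.cong[OF refl]) (auto simp: tail_excess_def dest: bounded)
  also have "\<dots> = (\<Sum>k\<in>{4..2*m+r}. \<Sum>d\<in>ge2_vectors m r. if d!l = k then weight d * tail_excess k else 0)"
    by (rule sum.swap)
  also have "\<dots> = (\<Sum>k\<in>{4..2*m+r}. tail_excess k * slot_weight m r l k)"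
    using finite_ge2_vectors
    by (simp add: sum.inter_filter[symmetric] slot_weight_def sum_distrib_left mult.commute)
  finally show ?thesis .
qed

lemma tail_expectation_bound:
  assumes pos: "0 < real m - 1 - real r" and z: "2 * (real r / (real m - 1 - real r)) < 1"
  shows "(\<Sum>d\<in>ge2_vectors m r. weight d * (\<Sum>l<m. tail_excess (d!l))) \<le>
     real m * (\<Sum>d\<in>ge2_vectors m r. weight d)
       * ((2 * (real r / (real m - 1 - real r)))^2 / (1 - 2 * (real r / (real m - 1 - real r))))"
proof -
  let ?y = "real r / (real m - 1 - real r)"
  let ?Z = "\<Sum>d\<in>ge2_vectors m r. weight d"
  have Z0: "0 \<le> ?Z" using weight_pos by (simp add: sum_nonneg less_imp_le)
  have per_slot: "(\<Sum>d\<in>ge2_vectors m r. weight d * tail_excess (d!l)) \<le> ?Z * ((2*?y)^2 / (1 - 2*?y))"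
    if l: "l<m" for l
  proof -
    have "(\<Sum>k\<in>{4..2*m+r}. tail_excess k * slot_weight m r l k) \<le> (\<Sum>k\<in>{4..2*m+r}. ?Z * (2*?y)^(k-2))"
    proof (rule sum_mono)
      fix k assume "k \<in> {4..2*m+r}"
      hence "tail_excess k * slot_weight m r l k \<le> 2^(k-2) * (?y^(k-2) * ?Z)"
        using slot_weight_geometric[OF l pos, of k] by (auto simp: tail_excess_def intro!: mult_left_mono)
      also have "\<dots> = ?Z * (2*?y)^(k-2)" by (simp only: power_mult_distrib ac_simps)
      finally show "tail_excess k * slot_weight m r l k \<le> ?Z * (2*?y)^(k-2)" .
    qed
    also have "\<dots> = ?Z * (\<Sum>k\<in>{4..2*m+r}. (2*?y)^(k-2))" by (simp add: sum_distrib_left)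
    also have "\<dots> \<le> ?Z * ((2*?y)^2 / (1 - 2*?y))"
      using geometric_tail_bound[of "2*?y" "2*m+r"] pos z Z0 by (intro mult_left_mono) auto
    finally show ?thesis using tail_excess_by_slot_weight[OF l] by simp
  qed
  have "(\<Sum>d\<in>ge2_vectors m r. weight d * (\<Sum>l<m. tail_excess (d!l)))
        = (\<Sum>l<m. \<Sum>d\<in>ge2_vectors m r. weight d * tail_excess (d!l))"
    by (simp add: sum_distrib_left sum.swap[of _ "ge2_vectors m r"])
  also have "\<dots> \<le> (\<Sum>l<m. ?Z * ((2*?y)^2 / (1 - 2*?y)))" by (intro sum_mono per_slot) simp
  finally show ?thesis by simp
qed

section \<open>Small tail statistic forces the good event\<close>

lemma minus2_le_tail: "4 \<le> k \<Longrightarrow> real k - 2 \<le> (2::real)^(k-2)"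
proof -
  assume "4 \<le> k"
  have "real (k-2) < real (2^(k-2))" by (simp only: of_nat_less_iff less_exp)
  thus ?thesis using \<open>4 \<le> k\<close> by simp
qed

lemma choose2_le_tail: "4 \<le> k \<Longrightarrow> real (k choose 2) \<le> 3 * (real k - 2) + 2^(k-2)"
proof (induction k rule: dec_induct)
  case base then show ?case by (simp add: numeral_eq_Suc)
next
  case (step k)
  have "Suc k choose 2 = k + (k choose 2)" by (simp add: numeral_eq_Suc)
  moreover have "Suc k - 2 = Suc (k - 2)" using step(1) by simp
  hence "(2::real)^(Suc k - 2) = 2 * 2^(k-2)" by (simp only: power_Suc)
  ultimately show ?case using step(3) minus2_le_tail[OF step(1)] by simp
qed

lemma slot_estimates:
  assumes "2 \<le> k"
  shows "0 \<le> real k - 2 - (if k = 3 then 1 else 0)" (is ?lower)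
    and "real k - 2 - (if k = 3 then 1 else 0) \<le> tail_excess k" (is ?upper)
    and "(if 3 \<le> k then real (k choose 2) else 0) \<le> 3 * (real k - 2) + tail_excess k" (is ?pairs)
proof -
  consider "k = 2" | "k = 3" | "4 \<le> k" using assms by linarith
  hence "?lower \<and> ?upper \<and> ?pairs"
  proof cases
    case 3
    thus ?thesis using minus2_le_tail[OF 3] choose2_le_tail[OF 3] by (auto simp: tail_excess_def)
  qed (auto simp: tail_excess_def numeral_eq_Suc)
  thus ?lower ?upper ?pairs by auto
qed

text \<open>Deterministic core: since \<Sum>(d_i - 2) = r, a tail statistic below c r
  (with c \<le> \<epsilon> and c \<le> 1) implies both conclusions of the theorem.\<close>
lemma good_of_small_tail:
  assumes d: "d \<in> ge2_vectors m r" and c: "c \<le> \<epsilon>" "c \<le> 1"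
    and small: "(\<Sum>l<m. tail_excess (d!l)) < c * real r"
  shows "\<bar>real (D3 d) - real r\<bar> \<le> \<epsilon> * real r \<and>
         (\<Sum>i | i < length d \<and> d ! i \<ge> 3. d ! i choose 2) < 4 * r"
proof -
  have len: "length d = m" and s: "sum_list d = 2*m+r" and g: "\<forall>l<m. 2 \<le> d!l"
    using d by (auto simp: ge2_vectors_def)
  define ind3 where "ind3 l = (if d!l = 3 then 1 else 0::real)" for l
  define big where "big l = (if 3 \<le> d!l then real (d!l choose 2) else 0)" for l
  have excess: "(\<Sum>l<m. real (d!l) - 2) = real r"
    using s len by (simp add: sum_list_as_sum sum_subtractf flip: of_nat_sum)
  have count3: "(\<Sum>l<m. ind3 l) = real (D3 d)"
  proof -
    have "{..<m} \<inter> {l. d!l = 3} = {i. i < length d \<and> d!i = 3}" using len by auto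
    thus ?thesis unfolding ind3_def D3_def by (simp add: sum.If_cases)
  qed
  have pairs: "real (\<Sum>i | i < length d \<and> d ! i \<ge> 3. d ! i choose 2) = (\<Sum>l<m. big l)"
  proof -
    have "{i. i < length d \<and> d ! i \<ge> 3} = {i\<in>{..<m}. 3 \<le> d!i}" using len by auto
    thus ?thesis unfolding big_def
      using sum.inter_filter[of "{..<m}" "\<lambda>i. real (d!i choose 2)" "\<lambda>i. 3 \<le> d!i"] by simp
  qed
  have "0 \<le> (\<Sum>l<m. real (d!l) - 2 - ind3 l)"
    using g slot_estimates(1) unfolding ind3_def by (intro sum_nonneg) auto
  moreover have "(\<Sum>l<m. real (d!l) - 2 - ind3 l) \<le> (\<Sum>l<m. tail_excess (d!l))"
    using g slot_estimates(2) unfolding ind3_def by (intro sum_mono) auto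
  moreover have "(\<Sum>l<m. real (d!l) - 2 - ind3 l) = real r - real (D3 d)"
    using excess count3 by (simp add: sum_subtractf)
  moreover have "c * real r \<le> \<epsilon> * real r" using c by (simp add: mult_right_mono)
  ultimately have D3_close: "\<bar>real (D3 d) - real r\<bar> \<le> \<epsilon> * real r" using small by linarith
  have "(\<Sum>l<m. big l) \<le> (\<Sum>l<m. 3 * (real (d!l) - 2) + tail_excess (d!l))"
    using g slot_estimates(3) unfolding big_def by (intro sum_mono) auto
  also have "\<dots> = 3 * real r + (\<Sum>l<m. tail_excess (d!l))"
    by (simp only: sum.distrib sum_distrib_left[symmetric] excess)
  finally have "real (\<Sum>i | i < length d \<and> d ! i \<ge> 3. d ! i choose 2) < real (4 * r)"
    using pairs small c(2) mult_right_mono[OF c(2), of "real r"] by simp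
  thus ?thesis using D3_close by (simp only: of_nat_less_iff)
qed

section \<open>The probability bound\<close>

lemma weighted_markov:
  fixes w Q :: "'a \<Rightarrow> real"
  assumes "finite A" "\<forall>a\<in>A. 0 \<le> w a \<and> 0 \<le> Q a" "0 < t"
  shows "(\<Sum>a\<in>{a\<in>A. t \<le> Q a}. w a) \<le> (\<Sum>a\<in>A. w a * Q a) / t"
proof -
  have "(\<Sum>a\<in>{a\<in>A. t \<le> Q a}. w a) \<le> (\<Sum>a\<in>{a\<in>A. t \<le> Q a}. w a * Q a / t)"
    using assms by (intro sum_mono) (auto simp: le_divide_eq mult_left_mono)
  also have "\<dots> \<le> (\<Sum>a\<in>A. w a * Q a / t)"
    using assms by (intro sum_mono2) auto
  finally show ?thesis by (simp add: sum_divide_distrib)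
qed

lemma markov_bound_rewrite:
  fixes x y m r c Z :: real
  assumes "x > 0" "r > 0" "m > 0" "1 - 2*y > 0" "c > 0" "y = r/x"
  shows "m * Z * ((2*y)^2/(1-2*y)) / (c*r) = Z * (4*y/((x/m)*(1-2*y)*c))"
proof -
  have "(2*y)^2 = 4*y*(r/x)" using assms(6) by (simp add: power2_eq_square)
  hence "m * Z * ((2*y)^2/(1-2*y)) / (c*r) = m * Z * (4*y*(r/x)/(1-2*y)) / (c*r)" by simp
  also have "\<dots> = Z * (4*y/((x/m)*(1-2*y)*c))" using assms(1-5) by (simp add: field_simps)
  finally show ?thesis .
qed

text \<open>The good event has conditional probability at least 1 - 4y/(x(1-2y)c), where
  y = r/(m-1-r), x = (m-1-r)/m and 0 < c \<le> min \<epsilon> 1: the bad event forces the tail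
  statistic to be at least c r, and Markov's inequality applies.\<close>
lemma good_event_prob_bound:
  fixes \<epsilon> c :: real
  assumes m: "m > 0" and r: "r > 0" and pos: "0 < real m - 1 - real r"
    and z: "2 * (real r / (real m - 1 - real r)) < 1"
    and c: "0 < c" "c \<le> \<epsilon>" "c \<le> 1"
  shows "1 - 4 * (real r / (real m - 1 - real r))
              / ((real m - 1 - real r) / real m * (1 - 2 * (real r / (real m - 1 - real r))) * c)
     \<le> multi_ge2_prob m (2*m+r) (\<lambda>d. \<bar>real (D3 d) - real r\<bar> \<le> \<epsilon> * real r \<and>
                 (\<Sum>i | i < length d \<and> d ! i \<ge> 3. d ! i choose 2) < 4 * r)"
    (is "1 - ?B \<le> multi_ge2_prob m _ ?G")
proof -
  let ?y = "real r / (real m - 1 - real r)"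
  let ?Q = "\<lambda>d. \<Sum>l<m. tail_excess (d!l)"
  let ?Z = "\<Sum>d\<in>ge2_vectors m r. weight d"
  let ?Zbad = "\<Sum>d\<in>{d\<in>ge2_vectors m r. \<not> ?G d}. weight d"
  have Z: "0 < ?Z" by (rule total_weight_pos[OF m])
  have "{d\<in>ge2_vectors m r. \<not> ?G d} \<subseteq> {d\<in>ge2_vectors m r. c * real r \<le> ?Q d}"
  proof (intro subsetI CollectI conjI)
    fix d assume "d \<in> {d\<in>ge2_vectors m r. \<not> ?G d}"
    thus "d \<in> ge2_vectors m r" and "c * real r \<le> ?Q d"
      using good_of_small_tail[of d m r c \<epsilon>] c by (auto simp: not_less[symmetric])
  qed
  hence "?Zbad \<le> (\<Sum>d\<in>{d\<in>ge2_vectors m r. c * real r \<le> ?Q d}. weight d)"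
    using finite_ge2_vectors weight_pos by (intro sum_mono2) (auto simp: less_imp_le)
  also have "\<dots> \<le> (\<Sum>d\<in>ge2_vectors m r. weight d * ?Q d) / (c * real r)"
    using c r finite_ge2_vectors weight_pos
    by (intro weighted_markov) (auto simp: less_imp_le tail_excess_nonneg sum_nonneg)
  also have "\<dots> \<le> real m * ?Z * ((2 * ?y)^2 / (1 - 2 * ?y)) / (c * real r)"
    using tail_expectation_bound[OF pos z] c r by (intro divide_right_mono) auto
  also have "\<dots> = ?Z * ?B"
    using m r pos z c by (intro markov_bound_rewrite) auto
  finally have bad: "?Zbad \<le> ?Z * ?B" .
  have "?Zbad / ?Z \<le> ?Z * ?B / ?Z" using bad Z by (intro divide_right_mono) auto
  also have "?Z * ?B / ?Z = ?B" using Z by (intro nonzero_mult_div_cancel_left) simp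
  finally show ?thesis unfolding ge2_prob_complement[OF m] by linarith
qed

lemma ge2_prob_le_1: "m > 0 \<Longrightarrow> multi_ge2_prob m (2*m+r) P \<le> 1"
  unfolding ge2_prob_complement using total_weight_pos weight_pos
  by (simp add: sum_nonneg less_imp_le)

lemma sparse_ratio_limits:
  fixes v r :: "nat \<Rightarrow> nat"
  assumes "\<forall>n. v n > 0" "filterlim v at_top sequentially"
    and q: "(\<lambda>n. real (r n) / real (v n)) \<longlonglongrightarrow> 0"
  shows "(\<lambda>n. (real (v n) - 1 - real (r n)) / real (v n)) \<longlonglongrightarrow> 1"
    and "(\<lambda>n. real (r n) / (real (v n) - 1 - real (r n))) \<longlonglongrightarrow> 0"
proof -
  have "filterlim (\<lambda>n. real (v n)) at_top sequentially"
    using filterlim_compose[OF filterlim_real_sequentially assms(2)] by (simp add: o_def)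
  hence u: "(\<lambda>n. 1 / real (v n)) \<longlonglongrightarrow> 0"
    using tendsto_inverse_0_at_top by (simp add: inverse_eq_divide)
  have x_eq: "(real (v n) - 1 - real (r n)) / real (v n) = 1 - 1 / real (v n) - real (r n) / real (v n)" for n
    using assms(1) by (simp add: field_simps)
  show x: "(\<lambda>n. (real (v n) - 1 - real (r n)) / real (v n)) \<longlonglongrightarrow> 1"
    unfolding x_eq using tendsto_diff[OF tendsto_diff[OF tendsto_const u] q] by simp
  have "(\<lambda>n. real (r n) / (real (v n) - 1 - real (r n)))
        = (\<lambda>n. (real (r n) / real (v n)) / ((real (v n) - 1 - real (r n)) / real (v n)))"
    using assms(1) by (simp add: fun_eq_iff)
  thus "(\<lambda>n. real (r n) / (real (v n) - 1 - real (r n))) \<longlonglongrightarrow> 0"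
    using tendsto_divide[OF q x] by (simp only: div_0)
qed

theorem mainTheorem13:
  fixes v r :: "nat \<Rightarrow> nat"
  assumes "\<forall>n. v n > 0" and "\<forall>n. r n > 0"
    and "filterlim v at_top sequentially"
    and "filterlim r at_top sequentially"
    and "(\<lambda>n. real (r n) / real (v n)) \<longlonglongrightarrow> 0"
  shows "\<forall>\<epsilon>>0. (\<lambda>n. multi_ge2_prob (v n) (2 * v n + r n)
            (\<lambda>d. \<bar>real (D3 d) - real (r n)\<bar> \<le> \<epsilon> * real (r n) \<and>
                 (\<Sum>i | i < length d \<and> d ! i \<ge> 3. d ! i choose 2) < 4 * r n))
          \<longlonglongrightarrow> 1"
proof (intro allI impI)
  fix \<epsilon> :: real assume "\<epsilon> > 0"
  define c where "c = min \<epsilon> 1"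
  have c: "0 < c" "c \<le> \<epsilon>" "c \<le> 1" using \<open>\<epsilon> > 0\<close> by (auto simp: c_def)
  define x where "x n = (real (v n) - 1 - real (r n)) / real (v n)" for n
  define y where "y n = real (r n) / (real (v n) - 1 - real (r n))" for n
  have x: "x \<longlonglongrightarrow> 1" and y: "y \<longlonglongrightarrow> 0"
    using sparse_ratio_limits[OF assms(1,3,5)] unfolding x_def y_def by auto
  have "(\<lambda>n. 1 - 4 * y n / (x n * (1 - 2 * y n) * c)) \<longlonglongrightarrow> 1 - 4 * 0 / (1 * (1 - 2 * 0) * c)"
    by (intro tendsto_intros x y) (use c in auto)
  hence B: "(\<lambda>n. 1 - 4 * y n / (x n * (1 - 2 * y n) * c)) \<longlonglongrightarrow> 1" by simp
  let ?P = "\<lambda>n. multi_ge2_prob (v n) (2 * v n + r n)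
            (\<lambda>d. \<bar>real (D3 d) - real (r n)\<bar> \<le> \<epsilon> * real (r n) \<and>
                 (\<Sum>i | i < length d \<and> d ! i \<ge> 3. d ! i choose 2) < 4 * r n)"
  have "eventually (\<lambda>n. 0 < x n) sequentially" using x by (rule order_tendstoD) simp
  moreover have "eventually (\<lambda>n. y n < 1/2) sequentially" using y by (rule order_tendstoD) simp
  ultimately have lower: "eventually (\<lambda>n. 1 - 4 * y n / (x n * (1 - 2 * y n) * c) \<le> ?P n) sequentially"
  proof eventually_elim
    case (elim n)
    have pos: "0 < real (v n) - 1 - real (r n)"
      using elim(1) assms(1) unfolding x_def by (simp add: zero_less_divide_iff)
    have z: "2 * (real (r n) / (real (v n) - 1 - real (r n))) < 1" using elim(2) unfolding y_def by linarith
    show ?case unfolding x_def y_def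
      by (rule good_event_prob_bound[OF _ _ pos z c]) (use assms(1,2) in auto)
  qed
  have upper: "eventually (\<lambda>n. ?P n \<le> 1) sequentially"
    by (intro always_eventually allI ge2_prob_le_1) (use assms(1) in auto)
  show "?P \<longlonglongrightarrow> 1" by (rule tendsto_sandwich[OF lower upper B tendsto_const])
qed

end
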